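(* Let $K=3$. There exist a constant $c>0$ and, for infinitely many $T$, a sequence of outcomes $\mathbf x\in[3]^T$ and forecasts $\mathbf p\in\Delta_3^T$ such that $\mathrm{Cal}(\mathbf p^{(i)},\mathbf x^{(i)})=0$ for each $i\in\{1,2,3\}$, but $\mathrm{MaxAgentReg}(\mathbf p,\mathbf x)\ge cT$.
   Context: $\Delta_K$ is the probability simplex in $\mathbb R^K$, outcome $i$ identified with $e_i$. For $\mathbf p\in\Delta_K^T$, $\mathbf x\in[K]^T$ and $i\in[K]$, define the binary sequences $\mathbf p^{(i)}\in[0,1]^T$ by $p^{(i)}_t=(p_t)_i$ and $\mathbf x^{(i)}\in\{0,1\}^T$ by $x^{(i)}_t=\mathbf 1(x_t=i)$. Binary calibration error: for $\mathbf q\in[0,1]^T$, $\mathbf y\in\{0,1\}^T$, $\mathrm{Cal}(\mathbf q,\mathbf y)=\sum_q|q\,n_q-m_q|$ with $n_q=|\{t:q_t=q\}|$, $m_q=|\{t:q_t=q,y_t=1\}|$. A multiclass scoring rule $\ell:\Delta_K\times[K]\to\mathbb R$ with $\ell(p;q)=\sum_iq_i\ell(p,i)$ is proper if $\ell(p;p)\le\ell(p';p)$ for all $p,p'$; $\mathcal L$ is the set of proper ones with values in $[-1,1]$. With $\beta=\frac1T\sum_te_{x_t}$, $\mathrm{Reg}_\ell(\mathbf p,\mathbf x)=\sum_t\ell(p_t,x_t)-\sum_t\ell(\beta,x_t)$ and $\mathrm{MaxAgentReg}(\mathbf p,\mathbf x)=\sup_{\ell\in\mathcal L}\mathrm{Reg}_\ell(\mathbf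 p,\mathbf x)$. *)

theory Defs
  imports Complex_Main
begin

text \<open>Outcomes [K] are represented by the naturals 0..K-1; a point of the simplex
  Delta_K is a function nat => real, nonnegative on {..<K}, summing to 1 there, and
  zero outside {..<K}. Sequences of length T are functions on nat, only the values
  at t < T matter.\<close>

definition simplex :: "nat \<Rightarrow> (nat \<Rightarrow> real) set" where
  "simplex K = {p. (\<forall>i<K. 0 \<le> p i) \<and> (\<Sum>i<K. p i) = 1 \<and> (\<forall>i\<ge>K. p i = 0)}"

definition Cal :: "nat \<Rightarrow> (nat \<Rightarrow> real) \<Rightarrow> (nat \<Rightarrow> bool) \<Rightarrow> real" where
  "Cal T q y = (\<Sum>v\<in>q ` {..<T}.
      \<bar>v * real (card {t\<in>{..<T}. q t = v}) - real (card {t\<in>{..<T}. q t = v \<and> y t})\<bar>)"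

definition exp_score :: "nat \<Rightarrow> ((nat \<Rightarrow> real) \<Rightarrow> nat \<Rightarrow> real) \<Rightarrow> (nat \<Rightarrow> real) \<Rightarrow> (nat \<Rightarrow> real) \<Rightarrow> real" where
  "exp_score K l p q = (\<Sum>i<K. q i * l p i)"

definition proper :: "nat \<Rightarrow> ((nat \<Rightarrow> real) \<Rightarrow> nat \<Rightarrow> real) \<Rightarrow> bool" where
  "proper K l \<longleftrightarrow> (\<forall>p\<in>simplex K. \<forall>p'\<in>simplex K. exp_score K l p p \<le> exp_score K l p' p)"

definition bounded_proper_rules :: "nat \<Rightarrow> ((nat \<Rightarrow> real) \<Rightarrow> nat \<Rightarrow> real) set" where
  "bounded_proper_rules K = {l. proper K l \<and> (\<forall>p\<in>simplex K. \<forall>i<K. \<bar>l p i\<bar> \<le> 1)}"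

definition empirical :: "nat \<Rightarrow> (nat \<Rightarrow> nat) \<Rightarrow> nat \<Rightarrow> real" where
  "empirical T x = (\<lambda>i. real (card {t\<in>{..<T}. x t = i}) / real T)"

definition Reg :: "nat \<Rightarrow> ((nat \<Rightarrow> real) \<Rightarrow> nat \<Rightarrow> real) \<Rightarrow> (nat \<Rightarrow> nat \<Rightarrow> real) \<Rightarrow> (nat \<Rightarrow> nat) \<Rightarrow> real" where
  "Reg T l p x = (\<Sum>t<T. l (p t) (x t)) - (\<Sum>t<T. l (empirical T x) (x t))"

definition MaxAgentReg :: "nat \<Rightarrow> nat \<Rightarrow> (nat \<Rightarrow> nat \<Rightarrow> real) \<Rightarrow> (nat \<Rightarrow> nat) \<Rightarrow> real" where
  "MaxAgentReg K T p x = (SUP l\<in>bounded_proper_rules K. Reg T l p x)"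

end

theory Submission
  imports Defs "HOL-Library.Infinite_Set"
begin

text \<open>Split \<open>T = 3n\<close> rounds into three blocks of length \<open>n\<close>: in block \<open>k\<close> the outcome
  is \<open>k\<close> and the forecast is uniform on \<open>{k, k+1 mod 3}\<close>. Every coordinate forecast takes
  the value \<open>1/2\<close> on exactly two blocks, and its outcome occurs on exactly one of them, so all
  binary calibration errors vanish. The proper rule charging \<open>-1\<close> to the outcome a forecast
  ranks highest and \<open>+1\<close> to the others, with ties broken cyclically, finds that each of these
  forecasts ranks highest the outcome that did not occur, so it pays \<open>+1\<close> in every round;
  the uniform empirical forecast pays \<open>-1\<close> on a third of the rounds. The regret is
  \<open>2n = 2T/3\<close>. Calibration error and regret both scale by \<open>n\<close> when every round is
  repeated \<open>n\<close> times, so only \<open>T = 3\<close> needs to be computed.\<close>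

lemma sum_lessThan_mult_div:
  fixes g :: "nat \<Rightarrow> 'a::semiring_1"
  shows "(\<Sum>t<m*n. g (t div n)) = of_nat n * (\<Sum>k<m. g k)"
proof -
  have block: "(\<Sum>t\<in>{k*n..<k*n+n}. g (t div n)) = of_nat n * g k" for k
  proof -
    have "t div n = k" if "t \<in> {k*n..<k*n+n}" for t
      using that by (auto intro: div_nat_eqI simp: mult.commute)
    then show ?thesis by simp
  qed
  have "(\<Sum>t<m*n. g (t div n)) = (\<Sum>k<m. \<Sum>t\<in>{k*n..<k*n+n}. g (t div n))"
    by (rule sum.nat_group[symmetric])
  also have "\<dots> = of_nat n * (\<Sum>k<m. g k)"
    by (simp add: block sum_distrib_left)
  finally show ?thesis .
qed

lemma card_lessThan_filter_eq_sum:
  "card {t\<in>{..<n::nat}. P t} = (\<Sum>t<n. if P t then 1 else 0)"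
  by (simp add: sum.If_cases Int_def)

lemma card_lessThan_mult_div:
  "card {t. t < m*n \<and> P (t div n)} = n * card {k. k < m \<and> P k}"
  using card_lessThan_filter_eq_sum sum_lessThan_mult_div[where 'a=nat, of "\<lambda>k. if P k then 1 else 0"]
  by simp

lemma image_div_lessThan_mult:
  fixes n :: nat
  assumes "n > 0"
  shows "(\<lambda>t. t div n) ` {..<m*n} = {..<m}"
proof
  show "(\<lambda>t. t div n) ` {..<m*n} \<subseteq> {..<m}"
    using less_mult_imp_div_less by auto
  show "{..<m} \<subseteq> (\<lambda>t. t div n) ` {..<m*n}"
  proof
    fix k assume "k \<in> {..<m}"
    then have "k*n \<in> {..<m*n}" "k = k*n div n" using assms by auto
    then show "k \<in> (\<lambda>t. t div n) ` {..<m*n}" by blast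
  qed
qed

lemma Cal_repeat:
  assumes "n > 0"
  shows "Cal (m*n) (\<lambda>t. q (t div n)) (\<lambda>t. y (t div n)) = real n * Cal m q y"
proof -
  have "(\<lambda>t. q (t div n)) ` {..<m*n} = q ` {..<m}"
    using image_div_lessThan_mult[OF assms] by (metis image_image)
  moreover have "\<bar>v * real (n * a) - real (n * b)\<bar> = real n * \<bar>v * real a - real b\<bar>"
    for v :: real and a b
  proof -
    have "v * real (n * a) - real (n * b) = real n * (v * real a - real b)"
      by (simp add: algebra_simps)
    then show ?thesis by (simp add: abs_mult)
  qed
  ultimately show ?thesis
    unfolding Cal_def
    by (simp add: card_lessThan_mult_div[where P = "\<lambda>k. q k = _"]
        card_lessThan_mult_div[where P = "\<lambda>k. q k = _ \<and> y k"] sum_distrib_left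
        del: of_nat_mult)
qed

lemma empirical_repeat:
  assumes "n > 0"
  shows "empirical (m*n) (\<lambda>t. x (t div n)) = empirical m x"
  using assms unfolding empirical_def
  by (simp add: card_lessThan_mult_div[where P = "\<lambda>k. x k = _"])

lemma Reg_repeat:
  assumes "n > 0"
  shows "Reg (m*n) l (\<lambda>t. p (t div n)) (\<lambda>t. x (t div n)) = real n * Reg m l p x"
  unfolding Reg_def empirical_repeat[OF assms]
  by (simp add: sum_lessThan_mult_div[where g = "\<lambda>k. l (p k) (x k)"]
      sum_lessThan_mult_div[where g = "\<lambda>k. l (empirical m x) (x k)"] right_diff_distrib)

lemma empirical_in_simplex:
  assumes "T > 0" and "\<forall>t<T. x t < K"
  shows "empirical T x \<in> simplex K"
proof -
  have "(\<Sum>i<K. real (card {t. t < T \<and> x t = i})) = (\<Sum>i<K. \<Sum>t<T. if x t = i then 1 else 0)"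
    by (simp add: sum.If_cases Int_def)
  also have "\<dots> = (\<Sum>t<T. \<Sum>i<K. if x t = i then 1 else 0)"
    by (rule sum.swap)
  also have "\<dots> = real T"
    using assms(2) by simp
  finally have "(\<Sum>i<K. real (card {t. t < T \<and> x t = i})) = real T" .
  moreover have "{t. t < T \<and> x t = i} = {}" if "i \<ge> K" for i
    using assms(2) that by fastforce
  ultimately show ?thesis
    using assms(1) by (simp add: simplex_def empirical_def flip: sum_divide_distrib)
qed

lemma Reg_le_double_length:
  assumes "l \<in> bounded_proper_rules K" and "\<forall>t<T. x t < K" and "\<forall>t<T. p t \<in> simplex K"
  shows "Reg T l p x \<le> 2 * real T"
proof (cases "T = 0")
  case True
  then show ?thesis by (simp add: Reg_def)
next
  case False
  have bound: "\<bar>l q i\<bar> \<le> 1" if "q \<in> simplex K" "i < K" for q i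
    using assms(1) that by (simp add: bounded_proper_rules_def)
  have "(\<Sum>t<T. l (p t) (x t)) \<le> (\<Sum>t<T. 1)"
    using bound assms(2,3) by (intro sum_mono) (simp add: abs_le_iff)
  moreover have "(\<Sum>t<T. -1) \<le> (\<Sum>t<T. l (empirical T x) (x t))"
    using bound assms(2) empirical_in_simplex[OF _ assms(2)] False
    by (intro sum_mono) (simp add: abs_le_iff)
  ultimately show ?thesis by (simp add: Reg_def)
qed

lemma Reg_le_MaxAgentReg:
  assumes "l \<in> bounded_proper_rules K" and "\<forall>t<T. x t < K" and "\<forall>t<T. p t \<in> simplex K"
  shows "Reg T l p x \<le> MaxAgentReg K T p x"
  unfolding MaxAgentReg_def
  using assms Reg_le_double_length by (intro cSUP_upper bdd_aboveI2) auto

definition argmax_rule :: "((nat \<Rightarrow> real) \<Rightarrow> nat) \<Rightarrow> (nat \<Rightarrow> real) \<Rightarrow> nat \<Rightarrow> real" where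
  "argmax_rule a p i = (if i = a p then -1 else 1)"

lemma exp_score_argmax_rule:
  assumes "p \<in> simplex K" and "a q < K"
  shows "exp_score K (argmax_rule a) q p = 1 - 2 * p (a q)"
proof -
  have "exp_score K (argmax_rule a) q p = (\<Sum>i<K. p i - 2 * (if i = a q then p i else 0))"
    unfolding exp_score_def argmax_rule_def by (intro sum.cong) auto
  also have "\<dots> = 1 - 2 * p (a q)"
    using assms by (simp add: sum_subtractf simplex_def flip: sum_distrib_left)
  finally show ?thesis .
qed

lemma argmax_rule_in_bounded_proper_rules:
  assumes "\<And>p. p \<in> simplex K \<Longrightarrow> a p < K \<and> (\<forall>j<K. p j \<le> p (a p))"
  shows "argmax_rule a \<in> bounded_proper_rules K"
proof -
  have "proper K (argmax_rule a)"
    unfolding proper_def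
    using assms by (auto simp: exp_score_argmax_rule)
  then show ?thesis
    by (simp add: bounded_proper_rules_def argmax_rule_def)
qed

text \<open>Ties are broken towards \<open>1\<close> over \<open>0\<close>, \<open>2\<close> over \<open>1\<close> and \<open>0\<close> over \<open>2\<close>, so on
  \<open>pair_forecast k\<close> the choice is \<open>Suc k mod 3\<close>, never \<open>k\<close>.\<close>

definition cyclic_argmax :: "(nat \<Rightarrow> real) \<Rightarrow> nat" where
  "cyclic_argmax p =
     (if p 1 \<ge> p 0 \<and> p 1 > p 2 then 1 else if p 2 \<ge> p 1 \<and> p 2 > p 0 then 2 else 0)"

definition pair_forecast :: "nat \<Rightarrow> nat \<Rightarrow> real" where
  "pair_forecast k i = (if i = k \<or> i = Suc k mod 3 then 1/2 else 0)"

lemma lessThan_3: "{..<3::nat} = {0, 1, 2}"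
  by auto

lemma cyclic_argmax_is_argmax: "cyclic_argmax p < 3 \<and> (\<forall>j<3. p j \<le> p (cyclic_argmax p))"
proof -
  have "cyclic_argmax p \<in> {0, 1, 2}"
    unfolding cyclic_argmax_def by simp
  moreover have "\<forall>j\<in>{0, 1, 2}. p j \<le> p (cyclic_argmax p)"
    unfolding cyclic_argmax_def by (simp split: if_split) linarith
  ultimately show ?thesis
    by (simp flip: lessThan_iff add: lessThan_3)
qed

lemma pair_forecast_in_simplex:
  assumes "k < 3"
  shows "pair_forecast k \<in> simplex 3"
proof -
  have "k = 0 \<or> k = 1 \<or> k = 2" using assms by auto
  then show ?thesis
    by (elim disjE) (simp_all add: simplex_def pair_forecast_def lessThan_3)
qed

lemma Cal_pair_forecast:
  assumes "i < 3"
  shows "Cal 3 (\<lambda>k. pair_forecast k i) (\<lambda>k. k = i) = 0"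
proof -
  have "i = 0 \<or> i = 1 \<or> i = 2" using assms by auto
  then show ?thesis
    unfolding Cal_def card_lessThan_filter_eq_sum
    by (elim disjE) (simp_all add: pair_forecast_def lessThan_3)
qed

lemma empirical_identity: "empirical n (\<lambda>k. k) = (\<lambda>i. if i < n then 1 / real n else 0)"
  unfolding empirical_def card_lessThan_filter_eq_sum by auto

lemma Reg_pair_forecast: "Reg 3 (argmax_rule cyclic_argmax) pair_forecast (\<lambda>k. k) = 2"
proof -
  have "(\<Sum>k<3. argmax_rule cyclic_argmax (pair_forecast k) k) = 3"
    by (simp add: lessThan_3 argmax_rule_def cyclic_argmax_def pair_forecast_def)
  moreover have "(\<Sum>k<3. argmax_rule cyclic_argmax (empirical 3 (\<lambda>k. k)) k) = 1"
    by (simp add: lessThan_3 argmax_rule_def cyclic_argmax_def empirical_identity)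
  ultimately show ?thesis
    by (simp add: Reg_def)
qed

lemma repeated_pair_forecasts:
  assumes "n > 0"
  shows "\<exists>x p. (\<forall>t<3*n. x t < 3) \<and> (\<forall>t<3*n. p t \<in> simplex 3) \<and>
    (\<forall>i<3. Cal (3*n) (\<lambda>t. p t i) (\<lambda>t. x t = i) = 0) \<and>
    MaxAgentReg 3 (3*n) p x \<ge> 2/3 * real (3*n)"
proof (intro exI conjI)
  let ?x = "\<lambda>t. t div n" and ?p = "\<lambda>t. pair_forecast (t div n)"
  show outcomes: "\<forall>t<3*n. ?x t < 3"
    using less_mult_imp_div_less by blast
  show forecasts: "\<forall>t<3*n. ?p t \<in> simplex 3"
    using outcomes pair_forecast_in_simplex by blast
  show "\<forall>i<3. Cal (3*n) (\<lambda>t. ?p t i) (\<lambda>t. ?x t = i) = 0"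
    using Cal_repeat[OF assms, of 3 "\<lambda>k. pair_forecast k _" "\<lambda>k. k = _"] Cal_pair_forecast
    by simp
  have "2/3 * real (3*n) = Reg (3*n) (argmax_rule cyclic_argmax) ?p ?x"
    using Reg_repeat[OF assms, of 3 _ pair_forecast "\<lambda>k. k"] Reg_pair_forecast by simp
  also have "\<dots> \<le> MaxAgentReg 3 (3*n) ?p ?x"
    using argmax_rule_in_bounded_proper_rules cyclic_argmax_is_argmax outcomes forecasts
    by (intro Reg_le_MaxAgentReg) auto
  finally show "MaxAgentReg 3 (3*n) ?p ?x \<ge> 2/3 * real (3*n)" .
qed

theorem theorem5p5:
  shows "\<exists>c>0. infinite {T::nat. \<exists>(x::nat \<Rightarrow> nat) (p::nat \<Rightarrow> nat \<Rightarrow> real).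
            (\<forall>t<T. x t < 3) \<and> (\<forall>t<T. p t \<in> simplex 3) \<and>
            (\<forall>i<3. Cal T (\<lambda>t. p t i) (\<lambda>t. x t = i) = 0) \<and>
            MaxAgentReg 3 T p x \<ge> c * real T}"
proof -
  have multiples_of_3: "infinite (range (\<lambda>n. 3 * Suc n))"
    by (intro range_inj_infinite) (simp add: inj_def)
  show ?thesis
    by (intro exI[of _ "2/3"] conjI infinite_super[OF _ multiples_of_3] image_subsetI CollectI
        repeated_pair_forecasts zero_less_Suc) simp
qed

end
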